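(* In the setting of the context, let $B\ge1$ and suppose $k_{B+1}=k_B=:k$. Then $$\mathrm{Pow}(B)-\mathrm{Pow}(B+1)=\mathbb{E}\Bigl[q(\mathcal{X})\,\binom{B}{k}q(\mathcal{X})^k(1-q(\mathcal{X}))^{B-k}\Bigr]$$ (interpreted as $0$ when $k<0$), i.e. $\mathbb{E}[q(\mathcal{X})\,\mathbb{P}(\mathrm{Binomial}(B,q(\mathcal{X}))=k\mid\mathcal{X})]$, and moreover $$\mathrm{Pow}(B)-\mathrm{Pow}(B+1)\le \frac{1}{\sqrt{2\pi(B+1)}}\sqrt{\frac{\alpha}{1-\alpha}}.$$
   Context: Let $\mathcal{X}$ be a random observed dataset taking values in a space on which a finite group $\mathcal{G}$ acts (write $\mathcal{X}^\pi$ for the action of $\pi\in\mathcal{G}$; the identity of $\mathcal{G}$ fixes every dataset), and let $T$ be a real-valued test statistic. Fix $\alpha\in(0,1)$. For an integer $B\ge1$, let $\pi_1,\dots,\pi_B$ be i.i.d. uniform on $\mathcal{G}$, independent of $\mathcal{X}$. The Monte Carlo permutation $p$-value is $p_B(\mathcal{X})=\bigl(1+\sum_{i=1}^B \mathbf{1}\{T(\mathcal{X}^{\pi_i})\ge T(\mathcal{X})\}\bigr)/(B+1)$, and the test rejects iff $p_B(\mathcal{X})\le\alpha$. Define $q(\mathcal{X})=\mathbb{P}(T(\mathcal{X}^\pi)\ge T(\mathcal{X})\mid \mathcal{X})$ for $\pi$ uniform on $\mathcal{G}$ independent of $\mathcal{X}$ (so $q(\mathcal{X})\in[1/|\mathcal{G}|,1]$),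 $R_B=\sum_{i=1}^B \mathbf{1}\{T(\mathcal{X}^{\pi_i})\ge T(\mathcal{X})\}$ (so $R_B\mid\mathcal{X}\sim\mathrm{Binomial}(B,q(\mathcal{X}))$), and the critical count $k_B=\lfloor (B+1)\alpha\rfloor-1$ for integers $B\ge 0$. Then $\{p_B(\mathcal{X})\le\alpha\}=\{R_B\le k_B\}$. The conditional rejection probability is $\phi_B(\mathcal{X})=\mathbb{P}(R_B\le k_B\mid\mathcal{X})$ and the (unconditional) power is $\mathrm{Pow}(B)=\mathbb{E}[\phi_B(\mathcal{X})]=\mathbb{E}\bigl[\mathbb{P}(\mathrm{Binomial}(B,q(\mathcal{X}))\le k_B\mid\mathcal{X})\bigr]$, for $B\ge1$. *)

theory Defs
  imports "HOL-Probability.Probability" "HOL-Algebra.Group_Action"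
begin

definition kcrit :: "real \<Rightarrow> nat \<Rightarrow> int" where
  "kcrit \<alpha> B = \<lfloor>(real B + 1) * \<alpha>\<rfloor> - 1"

text \<open>q(x) = P(T(x^pi) >= T(x)) for pi uniform on the finite group G.\<close>
definition qfun :: "('g, 'm) monoid_scheme \<Rightarrow> ('g \<Rightarrow> 'x \<Rightarrow> 'x) \<Rightarrow> ('x \<Rightarrow> real) \<Rightarrow> 'x \<Rightarrow> real" where
  "qfun G act T x = real (card {\<pi> \<in> carrier G. T (act \<pi> x) \<ge> T x}) / real (card (carrier G))"

definition phi :: "real \<Rightarrow> nat \<Rightarrow> real \<Rightarrow> real" where
  "phi \<alpha> B p = measure_pmf.prob (binomial_pmf B p) {j. int j \<le> kcrit \<alpha> B}"

definition Pow :: "'w measure \<Rightarrow> ('w \<Rightarrow> 'x) \<Rightarrow> ('g, 'm) monoid_scheme \<Rightarrow> ('g \<Rightarrow> 'x \<Rightarrow> 'x)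
    \<Rightarrow> ('x \<Rightarrow> real) \<Rightarrow> real \<Rightarrow> nat \<Rightarrow> real" where
  "Pow M X G act T \<alpha> B = integral\<^sup>L M (\<lambda>\<omega>. phi \<alpha> B (qfun G act T (X \<omega>)))"

end

theory Submission
  imports Defs "HOL-Real_Asymp.Real_Asymp"
begin

(* With the critical count k fixed, Pascal's rule shows that passing from B to B + 1 trials lowers
  the binomial distribution function at k by exactly p times the binomial probability of k; this
  gives the identity after integrating over q(X).  For the bound write a = k + 1, b = B - k and
  n = B + 1, so that p C(B,k) p^k (1-p)^(B-k) = (a/n) C(n,a) p^a (1-p)^b.  This is largest at
  p = a/n, and the lower bound ln m! >= (m + 1/2) ln m - m + ln (2 pi) / 2 (Stirling's formula with
  Wallis' constant, valid for all m >= 1) bounds C(n,a) (a/n)^a (b/n)^b by sqrt (n / (2 pi a b)).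
  Finally k + 1 <= (B + 1) alpha gives a/b <= alpha/(1 - alpha). *)

definition stirling_rem :: "nat \<Rightarrow> real" where
  "stirling_rem n = ln (fact n) - (real n + 1/2) * ln (real n) + real n"

lemma stirling_rem_diff:
  "stirling_rem n - stirling_rem (Suc n) = (real n + 1/2) * (ln (real n + 1) - ln (real n)) - 1"
proof -
  have "ln (fact (Suc n) :: real) = ln (real n + 1) + ln (fact n)"
    by (simp add: ln_mult add.commute)
  then show ?thesis unfolding stirling_rem_def by (simp add: algebra_simps)
qed

lemma stirling_rem_Suc_le:
  assumes "n \<ge> 1"
  shows "stirling_rem (Suc n) \<le> stirling_rem n"
proof -
  have "2 / (2 * real n + 1) \<le> ln (real n + 1) - ln (real n)"
    using ln_inverse_approx_ge[of "real n" "real n + 1"] assms by simp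
  then have "(real n + 1/2) * (2 / (2 * real n + 1)) \<le> (real n + 1/2) * (ln (real n + 1) - ln (real n))"
    by (intro mult_left_mono) auto
  also have "(real n + 1/2) * (2 / (2 * real n + 1)) = 1"
    by (simp add: field_simps)
  finally show ?thesis
    using stirling_rem_diff[of n] by simp
qed

lemma stirling_rem_Suc_ge:
  assumes "n \<ge> 1"
  shows "stirling_rem n - 1 / (4 * real n) \<le> stirling_rem (Suc n) - 1 / (4 * (real n + 1))"
proof -
  have "ln (real n + 1) - ln (real n) \<le> (inverse (real n) + inverse (real n + 1)) / 2"
    using ln_inverse_approx_le[of "real n" 1] assms by simp
  then have "(real n + 1/2) * (ln (real n + 1) - ln (real n))
      \<le> (real n + 1/2) * ((inverse (real n) + inverse (real n + 1)) / 2)"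
    by (intro mult_left_mono) auto
  also have "\<dots> = 1 + 1 / (4 * real n) - 1 / (4 * (real n + 1))"
    using assms by (simp add: field_simps) (simp add: divide_simps algebra_simps)
  finally show ?thesis
    using stirling_rem_diff[of n] by simp
qed

lemma stirling_rem_antimono:
  assumes "1 \<le> m" "m \<le> n"
  shows "stirling_rem n \<le> stirling_rem m"
  using assms(2,1)
proof (induction n rule: dec_induct)
  case (step k)
  then show ?case using stirling_rem_Suc_le[of k] by simp
qed simp

lemma stirling_rem_corrected_mono:
  assumes "1 \<le> m" "m \<le> n"
  shows "stirling_rem m - 1 / (4 * real m) \<le> stirling_rem n - 1 / (4 * real n)"
  using assms(2,1)
proof (induction n rule: dec_induct)
  case (step k)
  then show ?case using stirling_rem_Suc_ge[of k] by (simp add: add.commute)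
qed simp

lemma wallis_prod_eq_fact:
  "(\<Prod>k=1..n. (4 * real k^2) / (4 * real k^2 - 1))
     = 16^n * (fact n)^4 / ((fact (2*n))^2 * (2 * real n + 1))"
proof (induction n)
  case (Suc n)
  have fact2: "(fact (2 * Suc n) :: real) = (2 * real n + 2) * (2 * real n + 1) * fact (2 * n)"
    by (simp add: algebra_simps)
  have "4 * (real n + 1)^2 - 1 = (2 * real n + 1) * (2 * real n + 3)"
    by (simp add: algebra_simps power2_eq_square)
  then have "(\<Prod>k=1..Suc n. (4 * real k^2) / (4 * real k^2 - 1))
      = 16^n * (fact n)^4 / ((fact (2*n))^2 * (2 * real n + 1))
        * ((4 * (real n + 1)^2) / ((2 * real n + 1) * (2 * real n + 3)))"
    using Suc.IH by (simp add: add.commute)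
  also have "\<dots> = 16^Suc n * (fact (Suc n))^4 / ((fact (2 * Suc n))^2 * (2 * real (Suc n) + 1))"
    unfolding fact2 fact_Suc
    by (simp add: divide_simps) (simp add: algebra_simps power2_eq_square power4_eq_xxxx)
  finally show ?case .
qed simp

lemma ln_wallis_prod:
  assumes "n \<ge> 1"
  shows "ln (\<Prod>k=1..n. (4 * real k^2) / (4 * real k^2 - 1))
    = 4 * stirling_rem n - 2 * stirling_rem (2*n) - ln 2 + ln (real n) - ln (2 * real n + 1)"
proof -
  have n_pos: "real n > 0" using assms by simp
  have "ln (\<Prod>k=1..n. (4 * real k^2) / (4 * real k^2 - 1))
      = real n * ln 16 + 4 * ln (fact n) - (2 * ln (fact (2*n)) + ln (2 * real n + 1))"
    unfolding wallis_prod_eq_fact using n_pos by (simp add: ln_div ln_mult ln_realpow)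
  also have "ln (16::real) = 4 * ln 2"
    using ln_realpow[of 2 4] by simp
  finally show ?thesis
    using n_pos by (simp add: stirling_rem_def ln_mult algebra_simps)
qed

lemma stirling_rem_ge:
  assumes "m \<ge> 1"
  shows "ln (2 * pi) / 2 \<le> stirling_rem m"
proof -
  define W where "W n = (\<Prod>k=1..n. (4 * real k^2) / (4 * real k^2 - 1))" for n
  have W_le: "ln (W n) \<le> 2 * stirling_rem m - 2 * ln 2 + 1 / (4 * real n)" if "m \<le> n" for n
  proof -
    have n1: "n \<ge> 1" and n_pos: "real n > 0" using that assms by auto
    have "stirling_rem n - stirling_rem (2*n) \<le> 1 / (4 * real n) - 1 / (8 * real n)"
      using stirling_rem_corrected_mono[of n "2*n"] n1 by simp
    moreover have "stirling_rem n \<le> stirling_rem m"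
      using stirling_rem_antimono that assms by simp
    moreover have "ln 2 + ln (real n) \<le> ln (2 * real n + 1)"
      using n_pos ln_mult[of 2 "real n"] ln_le_cancel_iff[of "2 * real n" "2 * real n + 1"] by simp
    ultimately show ?thesis
      unfolding W_def ln_wallis_prod[OF n1] by (simp add: field_simps)
  qed
  have "(\<lambda>n. ln (W n)) \<longlonglongrightarrow> ln (pi / 2)"
    unfolding W_def by (intro tendsto_ln wallis) simp
  moreover have "(\<lambda>n. 2 * stirling_rem m - 2 * ln 2 + 1 / (4 * real n)) \<longlonglongrightarrow> 2 * stirling_rem m - 2 * ln 2"
    by real_asymp
  ultimately have "ln (pi / 2) \<le> 2 * stirling_rem m - 2 * ln 2"
    using W_le by (intro LIMSEQ_le) (auto simp: eventually_sequentially)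
  moreover have "ln (2 * pi) = ln (pi / 2) + 2 * ln 2"
    using ln_mult[of "pi / 2" 4] ln_realpow[of 2 2] by simp
  ultimately show ?thesis by simp
qed

lemma binomial_at_mean_le:
  fixes m r :: nat
  assumes "m \<ge> 1" "r \<ge> 1"
  defines "n \<equiv> m + r"
  shows "real (n choose m) * (real m / real n)^m * (real r / real n)^r
         \<le> sqrt (real n / (real m * real r)) / sqrt (2 * pi)"
proof -
  have m_pos: "real m > 0" and r_pos: "real r > 0" and n_pos: "real n > 0"
    using assms by auto
  have n_ln: "real n * ln (real n) = real m * ln (real n) + real r * ln (real n)"
    by (simp add: n_def algebra_simps)
  have "real (n choose m) = fact n / (fact m * fact r)"
    using binomial_fact[of m n] by (simp add: n_def)
  then have "ln (real (n choose m) * (real m / real n)^m * (real r / real n)^r)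
      = ln (fact n) - ln (fact m) - ln (fact r)
        + real m * (ln (real m) - ln (real n)) + real r * (ln (real r) - ln (real n))"
    using m_pos r_pos n_pos by (simp add: ln_mult ln_div ln_realpow)
  also have "\<dots> = stirling_rem n - stirling_rem m - stirling_rem r
                  + (ln (real n) - ln (real m) - ln (real r)) / 2"
    unfolding stirling_rem_def using n_ln by (simp add: n_def algebra_simps) (simp add: field_simps)
  also have "\<dots> \<le> (ln (real n) - ln (real m) - ln (real r)) / 2 - ln (2 * pi) / 2"
    using stirling_rem_antimono[of m n] stirling_rem_ge[of r] assms by simp
  also have "\<dots> = ln (sqrt (real n / (real m * real r)) / sqrt (2 * pi))"
    using m_pos r_pos n_pos by (simp add: ln_div ln_mult ln_sqrt)
  finally show ?thesis
    using m_pos r_pos n_pos by (subst (asm) ln_le_cancel_iff) (auto simp: n_def intro!: mult_pos_pos)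
qed

lemma power_mult_power_one_minus_le:
  fixes a b :: nat and q :: real
  assumes "a \<ge> 1" "b \<ge> 1" "0 \<le> q" "q \<le> 1"
  shows "q^a * (1 - q)^b \<le> (real a / real (a + b))^a * (real b / real (a + b))^b"
proof (cases "q = 0 \<or> q = 1")
  case True
  then show ?thesis using assms by (auto simp: zero_power)
next
  case False
  define p where "p = real a / real (a + b)"
  have a_pos: "real a > 0" and b_pos: "real b > 0" using assms by auto
  have p_pos: "0 < p" and p_less: "p < 1" using a_pos b_pos by (auto simp: p_def field_simps)
  have q_pos: "0 < q" and q_less: "q < 1" using False assms by auto
  have one_minus_p: "1 - p = real b / real (a + b)"
    using a_pos b_pos by (simp add: p_def field_simps)
  have "real a * ln (q / p) \<le> real a * (q / p - 1)"
    using q_pos p_pos a_pos by (intro mult_left_mono ln_le_minus_one) auto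
  moreover have "real b * ln ((1 - q) / (1 - p)) \<le> real b * ((1 - q) / (1 - p) - 1)"
    using q_less p_less b_pos by (intro mult_left_mono ln_le_minus_one) auto
  moreover have "real a * (q / p - 1) + real b * ((1 - q) / (1 - p) - 1) = 0"
    unfolding one_minus_p using a_pos b_pos by (simp add: p_def field_simps)
  ultimately have "ln (q^a * (1 - q)^b) \<le> ln (p^a * (1 - p)^b)"
    using q_pos q_less p_pos p_less by (simp add: ln_mult ln_realpow ln_div algebra_simps)
  then have "q^a * (1 - q)^b \<le> p^a * (1 - p)^b"
    using q_pos q_less p_pos p_less by (subst (asm) ln_le_cancel_iff) auto
  then show ?thesis unfolding one_minus_p by (simp add: p_def)
qed

lemma mult_binomial_term_le:
  fixes k B :: nat and q :: real
  assumes "k < B" "0 \<le> q" "q \<le> 1"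
  shows "q * (real (B choose k) * q^k * (1 - q)^(B - k))
           \<le> sqrt (real (Suc k) / real (B - k) / (2 * pi * (real B + 1)))"
proof -
  define a b where "a = Suc k" and "b = B - k"
  have ab: "a + b = Suc B" and a1: "a \<ge> 1" and b1: "b \<ge> 1"
    using assms(1) by (auto simp: a_def b_def)
  have a_pos: "real a > 0" and b_pos: "real b > 0"
    using a1 b1 by auto
  have "real (Suc k) * real (Suc B choose Suc k) = real (Suc B) * real (B choose k)"
    by (simp only: of_nat_mult[symmetric] Suc_times_binomial)
  then have choose_eq: "real (B choose k) = real (Suc k) / real (Suc B) * real (Suc B choose Suc k)"
    by (simp add: field_simps del: binomial_Suc_Suc of_nat_Suc)
  have "q * (real (B choose k) * q^k * (1 - q)^(B - k))
      = real a / real (a + b) * (real ((a + b) choose a) * (q^a * (1 - q)^b))"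
    unfolding choose_eq ab[symmetric] by (simp add: a_def b_def)
  also have "\<dots> \<le> real a / real (a + b)
      * (real ((a + b) choose a) * (real a / real (a + b))^a * (real b / real (a + b))^b)"
    unfolding mult.assoc
    by (intro mult_left_mono power_mult_power_one_minus_le a1 b1 assms(2,3)) auto
  also have "\<dots> \<le> real a / real (a + b) * (sqrt (real (a + b) / (real a * real b)) / sqrt (2 * pi))"
    by (intro mult_left_mono binomial_at_mean_le a1 b1) simp
  also have "\<dots> = sqrt ((real a / real (a + b))^2 * (real (a + b) / (real a * real b)) / (2 * pi))"
    by (simp add: real_sqrt_mult real_sqrt_divide)
  also have "(real a / real (a + b))^2 * (real (a + b) / (real a * real b)) / (2 * pi)
      = real a / real b / (2 * pi * real (a + b))"
  proof -
    have "(x / n)^2 * (n / (x * y)) / c = x / y / (c * n)" if "x > 0" "y > 0" "n > 0" "c > 0"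
      for x y n c :: real
      using that by (simp add: field_simps power2_eq_square)
    then show ?thesis using a_pos b_pos by simp
  qed
  finally show ?thesis using ab by (simp add: a_def b_def add.commute)
qed

lemma binomial_cdf_Suc_diff:
  fixes p :: real and B k :: nat
  assumes "k \<le> B"
  shows "(\<Sum>j\<le>k. real (B choose j) * p^j * (1 - p)^(B - j))
           - (\<Sum>j\<le>k. real (Suc B choose j) * p^j * (1 - p)^(Suc B - j))
         = p * (real (B choose k) * p^k * (1 - p)^(B - k))"
  using assms
proof (induction k)
  case (Suc k)
  let ?b = "\<lambda>n j. real (n choose j) * p^j * (1 - p)^(n - j)"
  have split_power: "(1 - p)^(B - k) = (1 - p) * (1 - p)^(B - Suc k)"
    using Suc.prems by (simp flip: power_Suc add: Suc_diff_Suc)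
  have "(\<Sum>j\<le>Suc k. ?b B j) - (\<Sum>j\<le>Suc k. ?b (Suc B) j)
      = p * ?b B k + ?b B (Suc k) - ?b (Suc B) (Suc k)"
    using Suc by simp
  also have "\<dots> = p * ?b B k + ?b B (Suc k)
      - (real (B choose k) + real (B choose Suc k)) * p^Suc k * (1 - p)^(B - k)"
    by simp
  also have "\<dots> = p * ?b B (Suc k)"
    unfolding split_power by (simp add: algebra_simps)
  finally show ?case .
qed (simp add: algebra_simps)

lemma kcrit_less: "\<alpha> < 1 \<Longrightarrow> kcrit \<alpha> B < int B"
proof -
  assume "\<alpha> < 1"
  then have "(real B + 1) * \<alpha> < real B + 1" by simp
  then have "\<lfloor>(real B + 1) * \<alpha>\<rfloor> < int B + 1"
    using of_int_floor_le[of "(real B + 1) * \<alpha>"] by linarith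
  then show ?thesis unfolding kcrit_def by simp
qed

lemma kcrit_plus_one_le: "real_of_int (kcrit \<alpha> B) + 1 \<le> (real B + 1) * \<alpha>"
  unfolding kcrit_def using of_int_floor_le[of "(real B + 1) * \<alpha>"] by simp

lemma phi_eq_sum:
  assumes "0 \<le> p" "p \<le> 1"
  shows "phi \<alpha> B p = (\<Sum>j | int j \<le> kcrit \<alpha> B. real (B choose j) * p^j * (1 - p)^(B - j))"
proof -
  have "{j. int j \<le> kcrit \<alpha> B} \<subseteq> {..nat (kcrit \<alpha> B)}" by auto
  then have "finite {j. int j \<le> kcrit \<alpha> B}" by (rule finite_subset) simp
  then show ?thesis
    unfolding phi_def using assms by (simp add: measure_measure_pmf_finite)
qed

lemma phi_nonneg: "0 \<le> phi \<alpha> B p"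
  and phi_le_one: "phi \<alpha> B p \<le> 1"
  unfolding phi_def by simp_all

lemma phi_diff_eq:
  assumes "kcrit \<alpha> (B + 1) = kcrit \<alpha> B" "\<alpha> < 1" "0 \<le> q" "q \<le> 1"
  shows "phi \<alpha> B q - phi \<alpha> (B + 1) q =
           q * (if kcrit \<alpha> B < 0 then 0
                else real (B choose nat (kcrit \<alpha> B)) * q ^ nat (kcrit \<alpha> B) * (1 - q) ^ (B - nat (kcrit \<alpha> B)))"
proof (cases "kcrit \<alpha> B < 0")
  case True
  then have "{j. int j \<le> kcrit \<alpha> B} = {}" by auto
  then show ?thesis
    using True assms by (simp add: phi_eq_sum)
next
  case False
  then have "{j. int j \<le> kcrit \<alpha> B} = {..nat (kcrit \<alpha> B)}" by auto
  moreover have "nat (kcrit \<alpha> B) \<le> B"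
    using kcrit_less[OF assms(2), of B] by simp
  ultimately show ?thesis
    using False assms binomial_cdf_Suc_diff[of "nat (kcrit \<alpha> B)" B q] by (simp add: phi_eq_sum)
qed

lemma phi_diff_le:
  assumes "kcrit \<alpha> (B + 1) = kcrit \<alpha> B" "0 < \<alpha>" "\<alpha> < 1" "0 \<le> q" "q \<le> 1"
  shows "phi \<alpha> B q - phi \<alpha> (B + 1) q \<le> 1 / sqrt (2 * pi * (real B + 1)) * sqrt (\<alpha> / (1 - \<alpha>))"
proof (cases "kcrit \<alpha> B < 0")
  case True
  then show ?thesis
    using phi_diff_eq[OF assms(1,3,4,5)] assms by simp
next
  case False
  define k where "k = nat (kcrit \<alpha> B)"
  have k_less: "k < B"
    using kcrit_less[OF assms(3), of B] False by (simp add: k_def nat_less_iff)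
  have "real (Suc k) \<le> (real B + 1) * \<alpha>"
    using kcrit_plus_one_le[of \<alpha> B] False by (simp add: k_def)
  then have ratio_le: "real (Suc k) / real (B - k) \<le> \<alpha> / (1 - \<alpha>)"
    using k_less assms(3) by (simp add: field_simps of_nat_diff)
  have "phi \<alpha> B q - phi \<alpha> (B + 1) q = q * (real (B choose k) * q^k * (1 - q)^(B - k))"
    using phi_diff_eq[OF assms(1,3,4,5)] False by (simp add: k_def)
  also have "\<dots> \<le> sqrt (real (Suc k) / real (B - k) / (2 * pi * (real B + 1)))"
    by (rule mult_binomial_term_le[OF k_less assms(4,5)])
  also have "\<dots> \<le> sqrt (\<alpha> / (1 - \<alpha>) / (2 * pi * (real B + 1)))"
    using pi_gt_zero by (intro real_sqrt_le_mono divide_right_mono ratio_le) simp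
  also have "\<dots> = 1 / sqrt (2 * pi * (real B + 1)) * sqrt (\<alpha> / (1 - \<alpha>))"
    by (simp add: real_sqrt_divide real_sqrt_mult)
  finally show ?thesis .
qed

lemma qfun_nonneg: "0 \<le> qfun G act T x"
  unfolding qfun_def by simp

lemma qfun_le_one: "qfun G act T x \<le> 1"
proof (cases "finite (carrier G)")
  case True
  then have "card {\<pi> \<in> carrier G. T x \<le> T (act \<pi> x)} \<le> card (carrier G)"
    by (intro card_mono) auto
  then show ?thesis unfolding qfun_def by (auto simp: divide_le_eq_1)
qed (simp add: qfun_def)

lemma measurable_qfun:
  assumes "finite (carrier G)"
    and "\<And>\<pi>. \<pi> \<in> carrier G \<Longrightarrow> act \<pi> \<in> N \<rightarrow>\<^sub>M N"
    and [measurable]: "T \<in> borel_measurable N"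
  shows "qfun G act T \<in> borel_measurable N"
proof -
  have qfun_eq: "qfun G act T =
      (\<lambda>x. (\<Sum>\<pi>\<in>carrier G. of_bool (T x \<le> T (act \<pi> x))) / real (card (carrier G)))"
    unfolding qfun_def using assms(1) by (simp add: Collect_conj_eq Int_commute)
  have "(\<lambda>x. of_bool (T x \<le> T (act \<pi> x)) :: real) \<in> borel_measurable N" if "\<pi> \<in> carrier G" for \<pi>
    using assms(2)[OF that] by measurable
  then show ?thesis
    unfolding qfun_eq by measurable
qed

lemma integrable_phi_comp:
  assumes "prob_space M" "Q \<in> borel_measurable M" "\<And>\<omega>. 0 \<le> Q \<omega>" "\<And>\<omega>. Q \<omega> \<le> 1"
  shows "integrable M (\<lambda>\<omega>. phi \<alpha> B (Q \<omega>))"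
proof -
  interpret prob_space M by (fact assms(1))
  have "(\<lambda>\<omega>. \<Sum>j | int j \<le> kcrit \<alpha> B. real (B choose j) * Q \<omega> ^ j * (1 - Q \<omega>)^(B - j))
          \<in> borel_measurable M"
    using assms(2) by measurable
  then have "(\<lambda>\<omega>. phi \<alpha> B (Q \<omega>)) \<in> borel_measurable M"
    using assms(3,4) by (simp add: phi_eq_sum)
  then show ?thesis
    using phi_nonneg phi_le_one by (intro integrable_const_bound[where B = 1]) auto
qed

theorem proposition2:
  fixes M :: "'w measure" and N :: "'x measure" and X :: "'w \<Rightarrow> 'x"
    and G :: "('g, 'm) monoid_scheme" and act :: "'g \<Rightarrow> 'x \<Rightarrow> 'x"
    and T :: "'x \<Rightarrow> real" and \<alpha> :: real and B :: nat
  assumes "prob_space M"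
    and "group G" and "finite (carrier G)"
    and "group_action G (space N) act"
    and "\<And>\<pi>. \<pi> \<in> carrier G \<Longrightarrow> act \<pi> \<in> N \<rightarrow>\<^sub>M N"
    and "X \<in> M \<rightarrow>\<^sub>M N"
    and "T \<in> borel_measurable N"
    and "0 < \<alpha>" and "\<alpha> < 1"
    and "B \<ge> 1"
    and "kcrit \<alpha> (B + 1) = kcrit \<alpha> B"
  shows "Pow M X G act T \<alpha> B - Pow M X G act T \<alpha> (B + 1) =
           integral\<^sup>L M (\<lambda>\<omega>. let q = qfun G act T (X \<omega>); k = kcrit \<alpha> B in
              q * (if k < 0 then 0
                   else real (B choose nat k) * q ^ nat k * (1 - q) ^ (B - nat k)))
     \<and> Pow M X G act T \<alpha> B - Pow M X G act T \<alpha> (B + 1)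
         \<le> 1 / sqrt (2 * pi * (real B + 1)) * sqrt (\<alpha> / (1 - \<alpha>))"
proof -
  interpret prob_space M by (fact assms(1))
  define Q where "Q \<omega> = qfun G act T (X \<omega>)" for \<omega>
  have Q_measurable: "Q \<in> borel_measurable M"
    unfolding Q_def using measurable_qfun[OF assms(3,5,7)] assms(6) by measurable
  have Q_bounds: "0 \<le> Q \<omega>" "Q \<omega> \<le> 1" for \<omega>
    unfolding Q_def by (simp_all add: qfun_nonneg qfun_le_one)
  have Pow_diff: "Pow M X G act T \<alpha> B - Pow M X G act T \<alpha> (B + 1)
      = (\<integral>\<omega>. phi \<alpha> B (Q \<omega>) - phi \<alpha> (B + 1) (Q \<omega>) \<partial>M)"
    unfolding Pow_def Q_def[symmetric]
    using integrable_phi_comp[OF assms(1) Q_measurable Q_bounds] by simp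
  show ?thesis
  proof
    show "Pow M X G act T \<alpha> B - Pow M X G act T \<alpha> (B + 1) =
           integral\<^sup>L M (\<lambda>\<omega>. let q = qfun G act T (X \<omega>); k = kcrit \<alpha> B in
              q * (if k < 0 then 0
                   else real (B choose nat k) * q ^ nat k * (1 - q) ^ (B - nat k)))"
      unfolding Pow_diff Q_def Let_def
      by (intro Bochner_Integration.integral_cong refl phi_diff_eq assms(9,11) qfun_nonneg qfun_le_one)
  next
    have "(\<integral>\<omega>. phi \<alpha> B (Q \<omega>) - phi \<alpha> (B + 1) (Q \<omega>) \<partial>M)
        \<le> (\<integral>\<omega>. 1 / sqrt (2 * pi * (real B + 1)) * sqrt (\<alpha> / (1 - \<alpha>)) \<partial>M)"
      using integrable_phi_comp[OF assms(1) Q_measurable Q_bounds]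
        phi_diff_le[OF assms(11,8,9) Q_bounds] by (intro integral_mono) auto
    then show "Pow M X G act T \<alpha> B - Pow M X G act T \<alpha> (B + 1)
        \<le> 1 / sqrt (2 * pi * (real B + 1)) * sqrt (\<alpha> / (1 - \<alpha>))"
      unfolding Pow_diff by (simp add: prob_space)
  qed
qed

end
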